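(* Let $m\ge (K+1)^2$. The sampling rule of algorithm $\mathbf{AL_1}$ with batch size $m$ ensures that $N_a(lm)\ge (lm)^{1/2}-1$ for every arm $a\in\{1,\dots,K\}$ and every $l\ge1$ (for which the $l$-th batch has been completed).
   Context: There are $K$ arms (distributions) that can be sampled; $N_a(n)$ is the number of samples from arm $a$ among the first $n$ samples. Algorithm $\mathbf{AL_1}$ with batch size $m$ operates as follows. (1) Initialize by allocating $m$ samples to the arms in round-robin fashion, so that each arm gets at least $\lfloor m/K\rfloor$ samples; set $l=1$ (so $lm$ samples have been generated). (2) Compute a probability vector $t^*(\hat\mu(lm))\in\Sigma_K$ from the current empirical distributions $\hat\mu(lm)$ of the arms and check a stopping criterion; if not stopped: (3) compute the starvation $s_a=\big(((l+1)m)^{1/2}-N_a(lm)\big)^+$ of each arm $a$. (4) If $m\ge\sum_a s_a$, generate $s_a$ samples from each arm $a$ (first $s_1$ from arm 1, then $s_2$ from arm 2, etc.), and in addition draw $\max\{m-\sum_a s_a,0\}$ independent indices from the distribution $t^*(\hat\mu(lm))$ on $\{1,\dots,K\}$ and sample each arm $i$ as many times as $i$ occurs among them. (5) Otherwise, if $\sum_a s_a>m$, generate $\hat s_a$ samples from each arm $a$, where $(\hat s_a)$ solves the load balancing problem $\min\max_a\{s_a-\hat s_a\}$ subject to $s_a\ge\hat s_a\ge0$ for all $a$ and $\sum_a\hat s_a=m$. (6) Increment $l$ by 1 and return to step (2). *)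

theory Defs
  imports Complex_Main
begin

(* Arms are indexed 0..<K.  N l a  is  N_a(l m), the number of samples of arm a
   after l batches of size m. *)

(* starvation s_a = ((((l+1) m)^(1/2)) - N_a(lm))^+, rounded up to a whole
   number of samples ("nat" truncates negatives = positive part) *)
definition starv :: "nat \<Rightarrow> nat \<Rightarrow> nat \<Rightarrow> nat" where
  "starv m l n = nat \<lceil>sqrt (real ((l + 1) * m)) - real n\<rceil>"

definition load_balanced :: "nat \<Rightarrow> (nat \<Rightarrow> nat) \<Rightarrow> nat \<Rightarrow> (nat \<Rightarrow> nat) \<Rightarrow> bool" where
  "load_balanced K s m sh \<longleftrightarrow>
     (\<forall>a<K. sh a \<le> s a) \<and> (\<Sum>a<K. sh a) = m \<and>
     (\<forall>sh'. (\<forall>a<K. sh' a \<le> s a) \<and> (\<Sum>a<K. sh' a) = m \<longrightarrow>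
        (MAX a\<in>{..<K}. s a - sh a) \<le> (MAX a\<in>{..<K}. s a - sh' a))"

(* One batch (steps (3)-(5)) of AL_1 after l batches: counts N before, N' after.
   In step (4) the arms drawn from t^*(mu(lm)) are arbitrary (any outcome of the
   random draws), giving extra counts r with sum m - sum_a s_a. *)
definition AL1_step :: "nat \<Rightarrow> nat \<Rightarrow> nat \<Rightarrow> (nat \<Rightarrow> nat) \<Rightarrow> (nat \<Rightarrow> nat) \<Rightarrow> bool" where
  "AL1_step K m l N N' \<longleftrightarrow>
     (let s = (\<lambda>a. starv m l (N a)) in
      if (\<Sum>a<K. s a) \<le> m then
        (\<exists>r. (\<Sum>a<K. r a) = m - (\<Sum>a<K. s a) \<and> (\<forall>a<K. N' a = N a + s a + r a))
      else
        (\<exists>sh. load_balanced K s m sh \<and> (\<forall>a<K. N' a = N a + sh a)))"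

(* A run of AL_1 in which batches 1..L have been completed (the algorithm did
   not stop before the end of batch L). Step (1): round-robin initialisation. *)
definition AL1_run :: "nat \<Rightarrow> nat \<Rightarrow> nat \<Rightarrow> (nat \<Rightarrow> nat \<Rightarrow> nat) \<Rightarrow> bool" where
  "AL1_run K m L N \<longleftrightarrow>
     (\<forall>a<K. N 1 a = card {i. i < m \<and> i mod K = a}) \<and>
     (\<forall>l. 1 \<le> l \<and> l < L \<longrightarrow> AL1_step K m l (N l) (N (l + 1)))"

end

theory Submission
  imports Defs
begin

(* After the round-robin start every arm
   has m div K >= sqrt m - 1 samples.  If the invariant holds after batch l, then
   sqrt((l+1)m) - sqrt(lm) <= sqrt m / 2 bounds every starvation by sqrt m / 2 + 2,
   and K (sqrt m / 2 + 2) <= m because sqrt m >= K + 1.  So the starvations fit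
   into the batch, step (4) applies, and every arm is brought up to at least
   sqrt((l+1)m) samples. *)

lemma of_nat_le_sqrt:
  fixes n m :: nat
  assumes "n^2 \<le> m"
  shows "real n \<le> sqrt (real m)"
  using assms by (intro real_le_rsqrt) (metis of_nat_le_iff of_nat_power)

lemma card_residue_class_ge:
  fixes K m a :: nat
  assumes "a < K"
  shows "m div K \<le> card {i. i < m \<and> i mod K = a}"
proof -
  have "(\<lambda>j. j * K + a) ` {..<m div K} \<subseteq> {i. i < m \<and> i mod K = a}"
  proof (rule image_subsetI)
    fix j assume "j \<in> {..<m div K}"
    then have "j < m div K" by simp
    have "j * K + a < (j + 1) * K" using assms by simp
    also have "\<dots> \<le> (m div K) * K" using \<open>j < m div K\<close> by (intro mult_right_mono) auto
    also have "\<dots> \<le> m" by simp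
    finally show "j * K + a \<in> {i. i < m \<and> i mod K = a}" using assms by simp
  qed
  moreover have "inj_on (\<lambda>j. j * K + a) {..<m div K}"
    using assms by (auto simp: inj_on_def)
  ultimately show ?thesis
    using card_inj_on_le by fastforce
qed

lemma sqrt_sub_one_le_div:
  fixes K m :: nat
  assumes "0 < K" "real K \<le> sqrt (real m)"
  shows "sqrt (real m) - 1 \<le> real (m div K)"
proof -
  have "m < K + (m div K) * K"
    using dividend_less_div_times[OF assms(1)] .
  then have "real m \<le> real K + real (m div K) * real K"
    by (metis less_imp_le of_nat_add of_nat_mono of_nat_mult)
  moreover have "real K * sqrt (real m) \<le> real m"
    using mult_right_mono[OF assms(2), of "sqrt (real m)"] by simp
  ultimately have "real K * (sqrt (real m) - 1) \<le> real K * real (m div K)"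
    by (simp add: algebra_simps)
  then show ?thesis using assms(1) by simp
qed

lemma sqrt_add_one_le:
  fixes x :: real
  assumes "9/16 \<le> x"
  shows "sqrt (x + 1) \<le> sqrt x + 1/2"
proof (rule real_le_lsqrt)
  have "3/4 \<le> sqrt x" using real_sqrt_le_mono[OF assms] by (simp add: real_sqrt_divide)
  then show "x + 1 \<le> (sqrt x + 1/2)^2" using assms by (simp add: power2_eq_square algebra_simps)
qed (use assms in auto)

lemma sqrt_next_batch_le:
  fixes l m :: nat
  assumes "1 \<le> l"
  shows "sqrt (real ((l + 1) * m)) \<le> sqrt (real (l * m)) + sqrt (real m) / 2"
proof -
  have "sqrt (real ((l + 1) * m)) = sqrt (real l + 1) * sqrt (real m)"
    by (simp add: real_sqrt_mult[symmetric] algebra_simps)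
  also have "\<dots> \<le> (sqrt (real l) + 1/2) * sqrt (real m)"
    using assms by (intro mult_right_mono sqrt_add_one_le) auto
  also have "\<dots> = sqrt (real (l * m)) + sqrt (real m) / 2"
    by (simp add: real_sqrt_mult algebra_simps)
  finally show ?thesis .
qed

lemma starv_le:
  fixes l m n :: nat
  assumes "1 \<le> l" "sqrt (real (l * m)) - 1 \<le> real n"
  shows "real (starv m l n) \<le> sqrt (real m) / 2 + 2"
proof -
  define y where "y = sqrt (real ((l + 1) * m)) - real n"
  have "y \<le> sqrt (real m) / 2 + 1"
    using sqrt_next_batch_le[OF assms(1), of m] assms(2) unfolding y_def by linarith
  then have "real_of_int \<lceil>y\<rceil> \<le> sqrt (real m) / 2 + 2" by linarith
  then show ?thesis
    unfolding starv_def y_def[symmetric] by (cases "0 \<le> \<lceil>y\<rceil>") auto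
qed

lemma starv_ge:
  "sqrt (real ((l + 1) * m)) \<le> real n + real (starv m l n)"
  unfolding starv_def by linarith

lemma sum_starv_le_batch:
  fixes K m l :: nat and N :: "nat \<Rightarrow> nat"
  assumes "(K + 1)^2 \<le> m" "1 \<le> l" "\<forall>a<K. sqrt (real (l * m)) - 1 \<le> real (N a)"
  shows "(\<Sum>a<K. starv m l (N a)) \<le> m"
proof -
  define x where "x = sqrt (real m)"
  have K_le: "real K \<le> x - 1"
    using of_nat_le_sqrt[OF assms(1)] unfolding x_def by simp
  have "real (\<Sum>a<K. starv m l (N a)) \<le> (\<Sum>a<K. x / 2 + 2)"
    unfolding of_nat_sum x_def using starv_le[OF assms(2)] assms(3) by (intro sum_mono) auto
  also have "\<dots> \<le> (x - 1) * (x / 2 + 2)"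
    using K_le x_def by (simp add: mult_right_mono)
  also have "\<dots> \<le> x^2"
    using zero_le_power2[of "x - 3/2"] by (simp add: power2_eq_square field_simps)
  also have "\<dots> = real m" unfolding x_def by simp
  finally show ?thesis by (simp only: of_nat_sum[symmetric] of_nat_le_iff)
qed

lemma AL1_step_covers_starvation:
  assumes "AL1_step K m l N N'" "(\<Sum>a<K. starv m l (N a)) \<le> m" "a < K"
  shows "N a + starv m l (N a) \<le> N' a"
  using assms unfolding AL1_step_def Let_def by fastforce

lemma AL1_step_preserves_sqrt_bound:
  fixes K m l :: nat and N N' :: "nat \<Rightarrow> nat"
  assumes "(K + 1)^2 \<le> m" "1 \<le> l" "\<forall>a<K. sqrt (real (l * m)) - 1 \<le> real (N a)"
    and "AL1_step K m l N N'" "a < K"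
  shows "sqrt (real ((l + 1) * m)) - 1 \<le> real (N' a)"
proof -
  have "N a + starv m l (N a) \<le> N' a"
    using AL1_step_covers_starvation[OF assms(4) sum_starv_le_batch[OF assms(1-3)] assms(5)] .
  then show ?thesis using starv_ge[of l m "N a"] by linarith
qed

lemma AL1_run_initial_bound:
  assumes "AL1_run K m L N" "(K + 1)^2 \<le> m" "a < K"
  shows "sqrt (real m) - 1 \<le> real (N 1 a)"
proof -
  have "real K \<le> sqrt (real m)"
    using of_nat_le_sqrt[OF assms(2)] by simp
  then have "sqrt (real m) - 1 \<le> real (m div K)"
    using assms(3) by (intro sqrt_sub_one_le_div) auto
  also have "m div K \<le> N 1 a"
    using assms(1,3) card_residue_class_ge[OF assms(3)] unfolding AL1_run_def by simp
  finally show ?thesis by simp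
qed

theorem lemma8:
  fixes K m L :: nat and N :: "nat \<Rightarrow> nat \<Rightarrow> nat"
  assumes "K \<ge> 1"
    and "m \<ge> (K + 1)^2"
    and "AL1_run K m L N"
  shows "\<forall>l a. 1 \<le> l \<and> l \<le> L \<and> a < K \<longrightarrow>
           real (N l a) \<ge> sqrt (real (l * m)) - 1"
proof -
  have "\<forall>a<K. sqrt (real (l * m)) - 1 \<le> real (N l a)" if "1 \<le> l" "l \<le> L" for l
    using that
  proof (induction l rule: dec_induct)
    case base
    show ?case using AL1_run_initial_bound[OF assms(3,2)] by simp
  next
    case (step l)
    then have "AL1_step K m l (N l) (N (l + 1))"
      and "\<forall>a<K. sqrt (real (l * m)) - 1 \<le> real (N l a)"
      using assms(3) unfolding AL1_run_def by simp_all
    then show ?case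
      using AL1_step_preserves_sqrt_bound[OF assms(2) \<open>1 \<le> l\<close>] by simp
  qed
  then show ?thesis by blast
qed

end
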